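(* Let $q,q^\dagger\in[1,2]$, $s,s'\in\mathbb R$, and let $u^\dagger\in B^{s^\dagger,q^\dagger}(\mathcal Z)$ for some $s^\dagger>s'$. Then as $\epsilon\to0$: (i) If $q^\dagger\ge q$ (with $s^\dagger>s'$): $$\inf_{h\in B^{s,q}(\mathcal Z):\|h-u^\dagger\|_{s',q}\le\epsilon}\|h\|_{s,q}^q\lesssim\begin{cases}1,& s<s^\dagger,\\ (-\log\epsilon)^{1-\frac q{q^\dagger}},& s=s^\dagger,\\ \epsilon^{-\frac{s-s^\dagger}{s^\dagger-s'}(q\wedge q^\dagger)},& s>s^\dagger.\end{cases}$$ (ii) If $q^\dagger<q$, assume in addition $u^\dagger\in B^{s^\dagger,q^\dagger,q}(\mathcal Z)$ and $s^\dagger>s'-\frac dq+\frac d{q^\dagger}$; then $$\inf_{h\in B^{s,q}(\mathcal Z):\|h-u^\dagger\|_{s',q}\le\epsilon}\|h\|_{s,q}^q\lesssim\begin{cases}1,& s\le s^\dagger+\frac dq-\frac d{q^\dagger},\\ \epsilon^{-\frac{\frac{s-s^\dagger}d-\frac1q+\frac1{q^\dagger}}{\frac{s^\dagger-s'}d+\frac1q-\frac1{q^\dagger}}q},& s>s^\dagger+\frac dq-\frac d{q^\dagger}.\end{cases}$$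
   Context: Let $d\ge1$, $\mathcal X\subset\mathbb R^d$ with a fixed basis $\{\phi_\ell\}$, $\mathcal T\subset[0,T]$ bounded, $\mathcal Z=\mathcal X\times\mathcal T$; functions on $\mathcal Z$ are written $u(\mathbf x,t)=\sum_\ell u_\ell(t)\phi_\ell(\mathbf x)$. For $p\ge1$, $\|u_\ell\|_p$ is the $L^p(\mathcal T)$ norm of the temporal coefficient. For $r,p\ge1$, $\tau_r(s)=\frac sd+\frac12-\frac1r$, $\|u\|_{s,r,p}=(\sum_\ell\ell^{\tau_r(s)r}\|u_\ell\|_p^r)^{1/r}$, $B^{s,r,p}(\mathcal Z)=\{u:\|u\|_{s,r,p}<\infty\}$, and $\|\cdot\|_{s,r}=\|\cdot\|_{s,r,r}$, $B^{s,r}(\mathcal Z)=B^{s,r,r}(\mathcal Z)$. $a\wedge b=\min\{a,b\}$; $\lesssim$ means up to a constant independent of $\epsilon$. *)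

theory Defs
  imports "HOL-Analysis.Analysis"
begin

text \<open>A function u(x,t) = sum_l u_l(t) phi_l(x) on Z = X x T is represented by its
  sequence of temporal coefficients u :: nat => real => real (index l >= 1; u 0 is unused).\<close>

definition Lp_pow :: "real \<Rightarrow> real set \<Rightarrow> (real \<Rightarrow> real) \<Rightarrow> ennreal" where
  "Lp_pow p T f = (\<integral>\<^sup>+ t\<in>T. ennreal (\<bar>f t\<bar> powr p) \<partial>lborel)"

definition in_Lp :: "real \<Rightarrow> real set \<Rightarrow> (real \<Rightarrow> real) \<Rightarrow> bool" where
  "in_Lp p T f \<longleftrightarrow> set_borel_measurable lborel T f \<and> Lp_pow p T f < \<infinity>"

definition Lp_norm :: "real \<Rightarrow> real set \<Rightarrow> (real \<Rightarrow> real) \<Rightarrow> real" where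
  "Lp_norm p T f = (enn2real (Lp_pow p T f)) powr (1 / p)"

definition tau :: "nat \<Rightarrow> real \<Rightarrow> real \<Rightarrow> real" where
  "tau d r s = s / real d + 1/2 - 1/r"

definition besov_term :: "nat \<Rightarrow> real set \<Rightarrow> real \<Rightarrow> real \<Rightarrow> real \<Rightarrow> (nat \<Rightarrow> real \<Rightarrow> real) \<Rightarrow> nat \<Rightarrow> real" where
  "besov_term d T s r p u l = real l powr (tau d r s * r) * (Lp_norm p T (u l)) powr r"

definition besov_norm :: "nat \<Rightarrow> real set \<Rightarrow> real \<Rightarrow> real \<Rightarrow> real \<Rightarrow> (nat \<Rightarrow> real \<Rightarrow> real) \<Rightarrow> real" where
  "besov_norm d T s r p u = (\<Sum>n. besov_term d T s r p u (Suc n)) powr (1 / r)"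

definition besov :: "nat \<Rightarrow> real set \<Rightarrow> real \<Rightarrow> real \<Rightarrow> real \<Rightarrow> (nat \<Rightarrow> real \<Rightarrow> real) set" where
  "besov d T s r p = {u. (\<forall>l\<ge>1. in_Lp p T (u l)) \<and> summable (\<lambda>n. besov_term d T s r p u (Suc n))}"

definition admissible :: "nat \<Rightarrow> real set \<Rightarrow> real \<Rightarrow> real \<Rightarrow> real \<Rightarrow> (nat \<Rightarrow> real \<Rightarrow> real) \<Rightarrow> real \<Rightarrow> (nat \<Rightarrow> real \<Rightarrow> real) set" where
  "admissible d T s s' q u eps =
     {h \<in> besov d T s q q. (\<lambda>l t. h l t - u l t) \<in> besov d T s' q q \<and>
        besov_norm d T s' q q (\<lambda>l t. h l t - u l t) \<le> eps}"

end

theory Submission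
  imports Defs
begin

(* Truncating u at frequency N gives the competitor h = (u_1, ..., u_N, 0, 0, ...): the error
   ||h - u||_{s',q}^q is the tail (l > N) and the cost ||h||_{s,q}^q the head (l <= N) of the
   series of l^(tau_q(t) q) ||u_l||_q^q, for t = s' and t = s. Each summand equals
   x_l^(q/qd) l^(q (t - sd)/d - 1 + q/qd), where the x_l are the summands of ||u||_{sd,qd,q}^qd.
   If qd <= q, then x_l^(q/qd) <= ||u||^(q - qd) x_l; if q < qd, Hoelder's inequality with
   exponent q/qd separates the x_l from a pure power sum (and u lies in B^{sd,qd,q} since
   L^qd(T) embeds into L^q(T) for bounded T). Either way the tail is O(N^(-q kappa)) for some
   kappa > 0 and the head is bounded, O((1 + ln N)^(1 - q/qd)) or a power of N; the cutoff
   N ~ eps^(-1/kappa) makes the tail at most eps^q and turns the head into the claimed rate. *)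

lemma Youngs_inequality_nonneg:
  fixes a b \<theta> :: real
  assumes "0 \<le> a" "0 \<le> b" "0 \<le> \<theta>" "\<theta> \<le> 1"
  shows "a powr \<theta> * b powr (1 - \<theta>) \<le> \<theta> * a + (1 - \<theta>) * b"
proof (cases "a = 0 \<or> b = 0")
  case True
  then show ?thesis using assms by auto
next
  case False
  then show ?thesis using assms Youngs_inequality_0[of \<theta> "1 - \<theta>" a b] by simp
qed

lemma mult_powr_le_powr_diff:
  fixes x \<rho> :: real
  assumes "1 \<le> x" "0 < \<rho>" "\<rho> \<le> 1"
  shows "\<rho> * x powr (\<rho> - 1) \<le> x powr \<rho> - (x - 1) powr \<rho>"
proof -
  have "(x - 1) powr \<rho> * x powr (1 - \<rho>) \<le> \<rho> * (x - 1) + (1 - \<rho>) * x"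
    using Youngs_inequality_nonneg[of "x - 1" x \<rho>] assms by simp
  then have "(x - 1) powr \<rho> * x powr (1 - \<rho>) * x powr (\<rho> - 1) \<le> (x - \<rho>) * x powr (\<rho> - 1)"
    by (intro mult_right_mono) (auto simp: algebra_simps)
  moreover have "x powr (1 - \<rho>) * x powr (\<rho> - 1) = 1" "x * x powr (\<rho> - 1) = x powr \<rho>"
    using assms by (simp_all add: powr_mult_base flip: powr_add)
  ultimately have "(x - 1) powr \<rho> \<le> x powr \<rho> - \<rho> * x powr (\<rho> - 1)"
    by (simp add: algebra_simps flip: mult.assoc)
  then show ?thesis by simp
qed

lemma mult_powr_le_powr_neg_diff:
  fixes x \<rho> :: real
  assumes "1 < x" "0 < \<rho>"
  shows "\<rho> * x powr (-1 - \<rho>) \<le> (x - 1) powr (-\<rho>) - x powr (-\<rho>)"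
proof -
  have "1 / x \<le> ln x - ln (x - 1)"
    using ln_le_minus_one[of "(x - 1) / x"] assms by (simp add: ln_div field_simps)
  then have "\<rho> / x \<le> \<rho> * (ln x - ln (x - 1))"
    using assms mult_left_mono[of "1 / x" _ \<rho>] by simp
  then have "1 + \<rho> / x \<le> exp (\<rho> * (ln x - ln (x - 1)))"
    using exp_ge_add_one_self[of "\<rho> * (ln x - ln (x - 1))"] by linarith
  moreover have "(x - 1) powr (-\<rho>) = x powr (-\<rho>) * exp (\<rho> * (ln x - ln (x - 1)))"
    using assms by (simp add: powr_def algebra_simps flip: exp_add)
  ultimately have "x powr (-\<rho>) * (1 + \<rho> / x) \<le> (x - 1) powr (-\<rho>)"
    by (simp add: mult_left_mono)
  moreover have "x powr (-\<rho>) * (1 + \<rho> / x) = x powr (-\<rho>) + \<rho> * x powr (-1 - \<rho>)"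
    using assms by (simp add: powr_diff powr_minus field_simps)
  ultimately show ?thesis by simp
qed

lemma powr_le_powr_max0:
  fixes x y e :: real
  assumes "1 \<le> x" "x \<le> y"
  shows "x powr e \<le> y powr (max 0 e)"
proof (cases "e \<le> 0")
  case True
  then have "x powr e \<le> x powr 0"
    using assms by (intro powr_mono) auto
  then show ?thesis using True assms by simp
next
  case False
  then show ?thesis using assms by (auto intro!: powr_mono2)
qed

lemma sum_greaterThanAtMost_powr_le:
  fixes \<rho> :: real
  assumes "0 < \<rho>" "1 \<le> N"
  shows "(\<Sum>l\<in>{N<..K}. real l powr (-1 - \<rho>)) \<le> real N powr (-\<rho>) / \<rho>"
proof (cases "N \<le> K")
  case True
  have "(\<Sum>l\<in>{N<..K}. real l powr (-1 - \<rho>)) \<le> (real N powr (-\<rho>) - real K powr (-\<rho>)) / \<rho>"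
    using True
  proof (induction K rule: dec_induct)
    case (step K)
    have "\<rho> * real (Suc K) powr (-1 - \<rho>) \<le> real K powr (-\<rho>) - real (Suc K) powr (-\<rho>)"
      using mult_powr_le_powr_neg_diff[of "real (Suc K)" \<rho>] step assms by simp
    moreover have "{N<..Suc K} = insert (Suc K) {N<..K}" using step by auto
    ultimately show ?case
      using step assms by (simp add: field_simps)
  qed simp
  also have "\<dots> \<le> real N powr (-\<rho>) / \<rho>"
    using assms by (simp add: divide_right_mono)
  finally show ?thesis .
qed (use assms in simp)

lemma sum_atLeastAtMost_powr_le:
  fixes \<rho> :: real
  assumes "\<rho> \<noteq> 0" "1 \<le> N"
  shows "(\<Sum>l=1..N. real l powr (\<rho> - 1)) \<le> (1 + 1 / \<bar>\<rho>\<bar>) * real N powr (max 0 \<rho>)"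
proof -
  consider "\<rho> < 0" | "0 < \<rho>" "\<rho> \<le> 1" | "1 < \<rho>"
    using assms by linarith
  then show ?thesis
  proof cases
    case 1
    have "{1..N} = insert 1 {1<..N}" using assms by auto
    then have "(\<Sum>l=1..N. real l powr (\<rho> - 1)) = 1 + (\<Sum>l\<in>{1<..N}. real l powr (-1 - (-\<rho>)))"
      by simp
    also have "\<dots> \<le> 1 + 1 / \<bar>\<rho>\<bar>"
      using sum_greaterThanAtMost_powr_le[of "-\<rho>" 1 N] 1 by simp
    finally show ?thesis using 1 assms by simp
  next
    case 2
    have "(\<Sum>l=1..N. real l powr (\<rho> - 1)) \<le> real N powr \<rho> / \<rho>"
      using assms(2)
    proof (induction N rule: dec_induct)
      case (step N)
      have "\<rho> * real (Suc N) powr (\<rho> - 1) \<le> real (Suc N) powr \<rho> - real N powr \<rho>"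
        using mult_powr_le_powr_diff[of "real (Suc N)" \<rho>] 2 by simp
      then show ?case using step 2 by (simp add: field_simps)
    qed (use 2 in simp)
    also have "\<dots> \<le> (1 + 1 / \<rho>) * real N powr \<rho>"
      using 2 by (simp add: distrib_right)
    finally show ?thesis using 2 by simp
  next
    case 3
    have "(\<Sum>l=1..N. real l powr (\<rho> - 1)) \<le> (\<Sum>l=1..N. real N powr (\<rho> - 1))"
      using 3 by (intro sum_mono powr_mono2) auto
    also have "\<dots> = real N powr \<rho>"
      using assms by (simp add: powr_mult_base)
    also have "\<dots> \<le> (1 + 1 / \<rho>) * real N powr \<rho>"
      using 3 by (simp add: distrib_right)
    finally show ?thesis using 3 by simp
  qed
qed

lemma sum_atLeastAtMost_powr_minus_one_le:
  assumes "1 \<le> N"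
  shows "(\<Sum>l=1..N. real l powr (-1)) \<le> 1 + ln (real N)"
proof -
  have "harm N - ln (real N) \<le> harm 1 - ln (real 1)"
    using euler_mascheroni_sequence_decreasing[of 1 N] assms by simp
  then show ?thesis
    by (simp add: harm_def powr_minus field_simps)
qed

lemma Holder_sum_powr:
  fixes x y :: "'a \<Rightarrow> real" and \<theta> X Y :: real
  assumes A: "finite A" and xy: "\<And>i. i \<in> A \<Longrightarrow> 0 \<le> x i" "\<And>i. i \<in> A \<Longrightarrow> 0 \<le> y i"
    and \<theta>: "0 \<le> \<theta>" "\<theta> \<le> 1"
    and X: "(\<Sum>i\<in>A. x i) \<le> X" and Y: "(\<Sum>i\<in>A. y i) \<le> Y"
  shows "(\<Sum>i\<in>A. x i powr \<theta> * y i powr (1 - \<theta>)) \<le> X powr \<theta> * Y powr (1 - \<theta>)"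
proof (cases "0 < X \<and> 0 < Y")
  case True
  have "(\<Sum>i\<in>A. (x i / X) powr \<theta> * (y i / Y) powr (1 - \<theta>))
      \<le> (\<Sum>i\<in>A. \<theta> * (x i / X) + (1 - \<theta>) * (y i / Y))"
    using xy \<theta> True by (intro sum_mono Youngs_inequality_nonneg) auto
  also have "\<dots> = \<theta> * ((\<Sum>i\<in>A. x i) / X) + (1 - \<theta>) * ((\<Sum>i\<in>A. y i) / Y)"
    by (simp add: sum.distrib sum_distrib_left sum_divide_distrib)
  also have "\<dots> \<le> \<theta> * 1 + (1 - \<theta>) * 1"
    using X Y True \<theta> by (intro add_mono mult_left_mono) auto
  finally have le1: "(\<Sum>i\<in>A. (x i / X) powr \<theta> * (y i / Y) powr (1 - \<theta>)) \<le> 1"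
    by simp
  have "(\<Sum>i\<in>A. x i powr \<theta> * y i powr (1 - \<theta>))
      = X powr \<theta> * Y powr (1 - \<theta>) * (\<Sum>i\<in>A. (x i / X) powr \<theta> * (y i / Y) powr (1 - \<theta>))"
    using xy True by (simp add: sum_distrib_left powr_divide)
  then show ?thesis
    using le1 by (simp add: mult_left_le)
next
  case False
  have "(\<forall>i\<in>A. x i = 0) \<or> (\<forall>i\<in>A. y i = 0)"
  proof -
    have "0 \<le> (\<Sum>i\<in>A. x i)" "0 \<le> (\<Sum>i\<in>A. y i)"
      using xy by (simp_all add: sum_nonneg)
    then have "(\<Sum>i\<in>A. x i) = 0 \<or> (\<Sum>i\<in>A. y i) = 0"
      using False X Y by linarith
    then show ?thesis
      using A xy by (simp add: sum_nonneg_eq_0_iff)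
  qed
  then have "(\<Sum>i\<in>A. x i powr \<theta> * y i powr (1 - \<theta>)) = 0"
    by (auto intro: sum.neutral)
  then show ?thesis by simp
qed

lemma sum_powr_mult_le:
  fixes x w :: "'a \<Rightarrow> real" and \<theta> X W :: real
  assumes A: "finite A" and x: "\<And>i. i \<in> A \<Longrightarrow> 0 \<le> x i \<and> x i \<le> X" and X: "(\<Sum>i\<in>A. x i) \<le> X"
    and \<theta>: "1 \<le> \<theta>" and w: "\<And>i. i \<in> A \<Longrightarrow> 0 \<le> w i \<and> w i \<le> W" and W: "0 \<le> W"
  shows "(\<Sum>i\<in>A. x i powr \<theta> * w i) \<le> X powr \<theta> * W"
proof -
  have X0: "0 \<le> X"
    using X sum_nonneg[of A x] x by fastforce
  have xpow: "x i powr \<theta> \<le> X powr (\<theta> - 1) * x i" if "i \<in> A" for i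
  proof (cases "x i = 0")
    case False
    then have "0 < x i" using x that by fastforce
    then have "x i powr \<theta> = x i powr (\<theta> - 1) * x i"
      by (simp add: powr_diff)
    also have "\<dots> \<le> X powr (\<theta> - 1) * x i"
      using x that \<theta> \<open>0 < x i\<close> by (intro mult_right_mono powr_mono2) auto
    finally show ?thesis .
  qed (use \<theta> in simp)
  have "(\<Sum>i\<in>A. x i powr \<theta> * w i) \<le> (\<Sum>i\<in>A. X powr (\<theta> - 1) * W * x i)"
    using xpow x w by (intro sum_mono) (simp add: mult_mono' mult.commute mult.left_commute)
  also have "\<dots> \<le> X powr (\<theta> - 1) * W * X"
    using X W by (simp add: mult_left_mono flip: sum_distrib_left)
  also have "\<dots> = X powr \<theta> * W"
    using X0 \<theta> by (cases "X = 0") (simp_all add: powr_diff)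
  finally show ?thesis .
qed

lemma Lp_pow_zero [simp]: "Lp_pow p T (\<lambda>t. 0) = 0"
  by (simp add: Lp_pow_def)

lemma Lp_norm_zero [simp]: "Lp_norm p T (\<lambda>t. 0) = 0"
  by (simp add: Lp_norm_def)

lemma Lp_norm_uminus [simp]: "Lp_norm p T (\<lambda>t. - f t) = Lp_norm p T f"
  by (simp add: Lp_norm_def Lp_pow_def)

lemma Lp_norm_nonneg: "0 \<le> Lp_norm p T f"
  by (simp add: Lp_norm_def)

lemma in_Lp_zero: "in_Lp p T (\<lambda>t. 0)"
  by (simp add: in_Lp_def set_borel_measurable_def)

lemma in_Lp_uminus: "in_Lp p T f \<Longrightarrow> in_Lp p T (\<lambda>t. - f t)"
  by (auto simp: in_Lp_def set_borel_measurable_def Lp_pow_def)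

lemma abs_powr_le_scaled:
  fixes v c q qd :: real
  assumes q: "0 < q" "q \<le> qd" and c: "0 < c"
  shows "\<bar>v\<bar> powr q \<le> c powr (q / qd - 1) * \<bar>v\<bar> powr qd + c powr (q / qd)"
proof -
  define a where "a = \<bar>v\<bar> powr qd / c"
  have a: "0 \<le> a" using c by (simp add: a_def)
  have "a powr (q / qd) \<le> q / qd * a + (1 - q / qd)"
    using Youngs_inequality_nonneg[of a 1 "q / qd"] a q by simp
  also have "\<dots> \<le> a + 1"
  proof -
    have "q / qd * a \<le> a"
      using a q by (intro mult_left_le_one_le) auto
    moreover have "0 \<le> q / qd"
      using q by simp
    ultimately show ?thesis by linarith
  qed
  finally have "c powr (q / qd) * a powr (q / qd) \<le> c powr (q / qd) * (a + 1)"
    by (simp add: mult_left_mono)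
  moreover have "c powr (q / qd) * a powr (q / qd) = \<bar>v\<bar> powr q"
    using q c by (simp add: a_def powr_divide powr_powr)
  moreover have "c powr (q / qd) * a = c powr (q / qd - 1) * \<bar>v\<bar> powr qd"
    using c by (simp add: a_def powr_diff)
  ultimately show ?thesis by (simp add: distrib_left)
qed

lemma Lp_pow_le_scaled:
  assumes T: "T \<in> sets lborel" and q: "0 < q" "q \<le> qd"
    and f: "set_borel_measurable lborel T f" and c: "0 < c"
  shows "Lp_pow q T f \<le> ennreal (c powr (q / qd - 1)) * Lp_pow qd T f
                        + ennreal (c powr (q / qd)) * emeasure lborel T"
proof -
  have fT: "(\<lambda>t. indicator T t *\<^sub>R f t) \<in> borel_measurable lborel"
    using f by (simp add: set_borel_measurable_def)
  have "(\<lambda>t. ennreal (\<bar>indicator T t *\<^sub>R f t\<bar> powr qd)) \<in> borel_measurable lborel"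
    using fT by measurable
  also have "(\<lambda>t. ennreal (\<bar>indicator T t *\<^sub>R f t\<bar> powr qd))
           = (\<lambda>t. ennreal (\<bar>f t\<bar> powr qd) * indicator T t)"
    by (auto simp: indicator_def fun_eq_iff)
  finally have fqd: "(\<lambda>t. ennreal (\<bar>f t\<bar> powr qd) * indicator T t) \<in> borel_measurable lborel" .
  have "Lp_pow q T f \<le> (\<integral>\<^sup>+ t. ennreal (c powr (q / qd - 1)) * (ennreal (\<bar>f t\<bar> powr qd) * indicator T t)
                          + ennreal (c powr (q / qd)) * indicator T t \<partial>lborel)"
    unfolding Lp_pow_def
  proof (intro nn_integral_mono)
    fix t
    have "ennreal (\<bar>f t\<bar> powr q)
        \<le> ennreal (c powr (q / qd - 1) * \<bar>f t\<bar> powr qd + c powr (q / qd))"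
      using abs_powr_le_scaled[OF q c] by (intro ennreal_leI) auto
    then show "ennreal (\<bar>f t\<bar> powr q) * indicator T t
        \<le> ennreal (c powr (q / qd - 1)) * (ennreal (\<bar>f t\<bar> powr qd) * indicator T t)
          + ennreal (c powr (q / qd)) * indicator T t"
      by (cases "t \<in> T") (simp_all add: ennreal_plus ennreal_mult)
  qed
  also have "\<dots> = ennreal (c powr (q / qd - 1)) * Lp_pow qd T f
                 + ennreal (c powr (q / qd)) * emeasure lborel T"
    using fqd T by (simp add: nn_integral_add nn_integral_cmult Lp_pow_def)
  finally show ?thesis .
qed

lemma le_powr_mult_of_scaled_le:
  fixes B c \<mu> \<theta> :: real
  assumes \<theta>: "0 < \<theta>" and c: "0 \<le> c" and \<mu>: "0 \<le> \<mu>"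
    and B: "\<And>\<delta>. 0 < \<delta> \<Longrightarrow> B \<le> \<delta> powr (\<theta> - 1) * c + \<delta> powr \<theta> * \<mu>"
  shows "B \<le> c powr \<theta> * (1 + \<mu>)"
proof (cases "c = 0")
  case True
  have "((\<lambda>\<delta>. \<delta> powr \<theta> * \<mu>) \<longlongrightarrow> 0 powr \<theta> * \<mu>) (at_right 0)"
    using \<theta> eventually_mono[OF eventually_at_right_less less_imp_le]
    by (intro tendsto_intros) auto
  moreover have "\<forall>\<^sub>F \<delta> in at_right 0. B \<le> \<delta> powr \<theta> * \<mu>"
    using B True by (auto intro: eventually_mono[OF eventually_at_right_less])
  ultimately have "B \<le> 0 powr \<theta> * \<mu>"
    by (rule tendsto_lowerbound) simp
  then show ?thesis using True by simp
next
  case False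
  then show ?thesis
    using B[of c] c by (simp add: powr_mult_base distrib_left powr_diff)
qed

lemma Lp_norm_le_Lp_norm:
  assumes T: "T \<in> sets lborel" "emeasure lborel T < \<infinity>" and q: "0 < q" "q \<le> qd"
    and f: "in_Lp qd T f"
  shows "in_Lp q T f"
    and "Lp_norm q T f \<le> (1 + measure lborel T) powr (1 / q) * Lp_norm qd T f"
proof -
  define \<theta> where "\<theta> = q / qd"
  have \<theta>: "0 < \<theta>" using q by (simp add: \<theta>_def)
  define \<mu> where "\<mu> = measure lborel T"
  have \<mu>: "0 \<le> \<mu>" "emeasure lborel T = ennreal \<mu>"
    using T by (simp_all add: \<mu>_def emeasure_eq_ennreal_measure)
  define c where "c = enn2real (Lp_pow qd T f)"
  have c: "0 \<le> c" "Lp_pow qd T f = ennreal c"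
    using f by (simp_all add: c_def in_Lp_def ennreal_enn2real)
  have raw: "Lp_pow q T f \<le> ennreal (\<delta> powr (\<theta> - 1) * c + \<delta> powr \<theta> * \<mu>)" if "0 < \<delta>" for \<delta>
    using Lp_pow_le_scaled[OF T(1) q _ that, of f] f c \<mu>
    by (simp add: in_Lp_def \<theta>_def ennreal_plus ennreal_mult')
  have "Lp_pow q T f < \<infinity>"
    using raw[of 1] by (simp add: order_le_less_trans)
  then show "in_Lp q T f"
    using f by (simp add: in_Lp_def)
  define B where "B = enn2real (Lp_pow q T f)"
  have B: "B \<le> \<delta> powr (\<theta> - 1) * c + \<delta> powr \<theta> * \<mu>" if "0 < \<delta>" for \<delta>
    unfolding B_def using raw[OF that] c \<mu> by (intro enn2real_leI) auto
  have "B \<le> c powr \<theta> * (1 + \<mu>)"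
    by (rule le_powr_mult_of_scaled_le[OF \<theta> c(1) \<mu>(1) B])
  then have "B powr (1 / q) \<le> (c powr \<theta> * (1 + \<mu>)) powr (1 / q)"
    using q by (intro powr_mono2) (auto simp: B_def)
  also have "\<dots> = (1 + \<mu>) powr (1 / q) * c powr (1 / qd)"
    using c \<mu> q by (simp add: powr_mult powr_powr \<theta>_def)
  finally show "Lp_norm q T f \<le> (1 + measure lborel T) powr (1 / q) * Lp_norm qd T f"
    by (simp add: Lp_norm_def B_def c_def \<mu>_def)
qed

lemma besov_subset_besov:
  assumes T: "T \<in> sets lborel" "emeasure lborel T < \<infinity>" and p: "0 < p" "p \<le> p'" and r: "0 \<le> r"
  shows "besov d T s r p' \<subseteq> besov d T s r p"
proof
  fix u assume u: "u \<in> besov d T s r p'"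
  define K where "K = (1 + measure lborel T) powr (1 / p)"
  have Lp: "in_Lp p T (u l)" "Lp_norm p T (u l) \<le> K * Lp_norm p' T (u l)" if "1 \<le> l" for l
    using Lp_norm_le_Lp_norm[OF T p] u that by (auto simp: besov_def K_def)
  have summ: "summable (\<lambda>n. K powr r * besov_term d T s r p' u (Suc n))"
    using u by (intro summable_mult) (simp add: besov_def)
  have le: "besov_term d T s r p u (Suc n) \<le> K powr r * besov_term d T s r p' u (Suc n)" for n
  proof -
    have "Lp_norm p T (u (Suc n)) powr r \<le> (K * Lp_norm p' T (u (Suc n))) powr r"
      using Lp[of "Suc n"] r by (intro powr_mono2) (auto simp: Lp_norm_nonneg)
    then show ?thesis
      by (simp add: besov_term_def K_def powr_mult Lp_norm_nonneg mult_left_mono mult.left_commute)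
  qed
  have "summable (\<lambda>n. besov_term d T s r p u (Suc n))"
    using le by (intro summable_comparison_test'[OF summ]) (simp add: besov_term_def)
  then show "u \<in> besov d T s r p"
    using Lp by (simp add: besov_def)
qed

lemma besov_term_0 [simp]: "besov_term d T s r p u 0 = 0"
  by (simp add: besov_term_def)

lemma besov_term_nonneg: "0 \<le> besov_term d T s r p u l"
  by (simp add: besov_term_def)

lemma besov_norm_powr:
  assumes u: "u \<in> besov d T s r p" and r: "0 < r"
  shows "summable (besov_term d T s r p u)"
    and "besov_norm d T s r p u powr r = (\<Sum>l. besov_term d T s r p u l)"
proof -
  have "summable (\<lambda>n. besov_term d T s r p u (Suc n))"
    using u by (simp add: besov_def)
  then show summ: "summable (besov_term d T s r p u)"
    by (simp add: summable_Suc_iff)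
  have "(\<Sum>n. besov_term d T s r p u (Suc n)) = (\<Sum>l. besov_term d T s r p u l)"
    using suminf_split_head[OF summ] by simp
  moreover have "0 \<le> (\<Sum>l. besov_term d T s r p u l)"
    using summ by (simp add: suminf_nonneg besov_term_nonneg)
  ultimately show "besov_norm d T s r p u powr r = (\<Sum>l. besov_term d T s r p u l)"
    using r by (simp add: besov_norm_def powr_powr)
qed

lemma sum_besov_term_le:
  assumes "u \<in> besov d T s r p" "0 < r" "finite A"
  shows "(\<Sum>l\<in>A. besov_term d T s r p u l) \<le> besov_norm d T s r p u powr r"
  using sum_le_suminf[of "besov_term d T s r p u" A] besov_norm_powr[OF assms(1,2)] assms(3)
  by (simp add: besov_term_nonneg)

lemma besov_term_rescale:
  assumes d: "1 \<le> d" and q: "0 < q" "0 < qd"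
  shows "besov_term d T t q q u l
       = besov_term d T sd qd q u l powr (q / qd) * real l powr (q * (t - sd) / d - 1 + q / qd)"
proof (cases "l = 0")
  case False
  have "besov_term d T sd qd q u l powr (q / qd)
      = real l powr (tau d qd sd * qd * (q / qd)) * Lp_norm q T (u l) powr q"
    using q by (simp add: besov_term_def powr_mult powr_powr Lp_norm_nonneg)
  moreover have "tau d qd sd * qd * (q / qd) + (q * (t - sd) / d - 1 + q / qd) = tau d q t * q"
    using d q by (simp add: tau_def field_simps)
  ultimately show ?thesis
    using False by (simp add: besov_term_def mult_ac flip: powr_add)
qed simp

definition truncate :: "nat \<Rightarrow> (nat \<Rightarrow> real \<Rightarrow> real) \<Rightarrow> nat \<Rightarrow> real \<Rightarrow> real" where
  "truncate N u l = (if l \<le> N then u l else (\<lambda>t. 0))"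

lemma besov_term_truncate:
  "besov_term d T s r p (truncate N u) l = (if l \<le> N then besov_term d T s r p u l else 0)"
  by (simp add: besov_term_def truncate_def)

lemma besov_term_truncate_diff:
  "besov_term d T s r p (\<lambda>l t. truncate N u l t - u l t) l
     = (if l \<le> N then 0 else besov_term d T s r p u l)"
proof -
  have "(\<lambda>t. truncate N u l t - u l t) = (if l \<le> N then (\<lambda>t. 0) else (\<lambda>t. - u l t))"
    by (auto simp: truncate_def)
  then show ?thesis
    by (simp add: besov_term_def)
qed

lemma truncate_admissible:
  assumes q: "0 < q" and u: "\<And>l. 1 \<le> l \<Longrightarrow> in_Lp q T (u l)" and eps: "0 < eps"
    and tail: "\<And>K. (\<Sum>l\<in>{N<..K}. besov_term d T s' q q u l) \<le> eps powr q"
  shows "truncate N u \<in> admissible d T s s' q u eps"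
    and "besov_norm d T s q q (truncate N u) powr q = (\<Sum>l=1..N. besov_term d T s q q u l)"
proof -
  let ?h = "truncate N u" and ?g = "\<lambda>l t. truncate N u l t - u l t"
  have "(\<lambda>n. besov_term d T s q q ?h (Suc n)) sums (\<Sum>n<N. besov_term d T s q q ?h (Suc n))"
    by (intro sums_finite) (simp_all add: besov_term_truncate)
  also have "(\<Sum>n<N. besov_term d T s q q ?h (Suc n)) = (\<Sum>l=1..N. besov_term d T s q q u l)"
    by (simp add: sum_bounds_lt_plus1 besov_term_truncate)
  finally have head: "(\<lambda>n. besov_term d T s q q ?h (Suc n)) sums (\<Sum>l=1..N. besov_term d T s q q u l)" .
  have partial: "(\<Sum>n<K. besov_term d T s' q q ?g (Suc n)) = (\<Sum>l\<in>{N<..K}. besov_term d T s' q q u l)" for K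
  proof -
    have "(\<Sum>n<K. besov_term d T s' q q ?g (Suc n)) = (\<Sum>l=1..K. besov_term d T s' q q ?g l)"
      by (rule sum_bounds_lt_plus1)
    also have "\<dots> = (\<Sum>l\<in>{N<..K}. besov_term d T s' q q u l)"
      by (rule sum.mono_neutral_cong_right) (auto simp: besov_term_truncate_diff)
    finally show ?thesis .
  qed
  have summ: "summable (\<lambda>n. besov_term d T s' q q ?g (Suc n))"
    by (rule summableI_nonneg_bounded[where x = "eps powr q"])
       (simp_all add: besov_term_nonneg partial tail)
  have "(\<Sum>n. besov_term d T s' q q ?g (Suc n)) \<le> eps powr q"
    using summ by (rule suminf_le_const) (simp add: partial tail)
  then have "besov_norm d T s' q q ?g \<le> (eps powr q) powr (1 / q)"
    unfolding besov_norm_def using q summ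
    by (intro powr_mono2) (simp_all add: suminf_nonneg besov_term_nonneg)
  also have "\<dots> = eps"
    using q eps by (simp add: powr_powr)
  finally have "besov_norm d T s' q q ?g \<le> eps" .
  moreover have "?h \<in> besov d T s q q"
    using head u by (auto simp: besov_def sums_summable truncate_def in_Lp_zero)
  moreover have "?g \<in> besov d T s' q q"
    using summ u by (auto simp: besov_def truncate_def in_Lp_zero in_Lp_uminus)
  ultimately show "?h \<in> admissible d T s s' q u eps"
    by (simp add: admissible_def)
  show "besov_norm d T s q q ?h powr q = (\<Sum>l=1..N. besov_term d T s q q u l)"
    using head q by (simp add: besov_norm_def sums_iff powr_powr sum_nonneg besov_term_nonneg)
qed

(* The tail is bounded through all its partial sums, so no summability of f is presupposed. *)
definition cutoff_rate :: "(nat \<Rightarrow> real) \<Rightarrow> (nat \<Rightarrow> real) \<Rightarrow> real \<Rightarrow> (real \<Rightarrow> real) \<Rightarrow> bool" where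
  "cutoff_rate f g q R \<longleftrightarrow>
     (\<exists>C>0. \<forall>\<^sub>F eps in at_right 0. \<exists>N.
        (\<forall>K. (\<Sum>l\<in>{N<..K}. f l) \<le> eps powr q) \<and> (\<Sum>l=1..N. g l) \<le> C * R eps)"

lemma cutoff_rate_cong:
  assumes "cutoff_rate f g q R" "\<forall>\<^sub>F eps in at_right 0. R eps = R' eps"
  shows "cutoff_rate f g q R'"
proof -
  obtain C where "C > 0" and ev: "\<forall>\<^sub>F eps in at_right 0. \<exists>N.
      (\<forall>K. (\<Sum>l\<in>{N<..K}. f l) \<le> eps powr q) \<and> (\<Sum>l=1..N. g l) \<le> C * R eps"
    using assms(1) by (auto simp: cutoff_rate_def)
  from ev assms(2) have "\<forall>\<^sub>F eps in at_right 0. \<exists>N.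
      (\<forall>K. (\<Sum>l\<in>{N<..K}. f l) \<le> eps powr q) \<and> (\<Sum>l=1..N. g l) \<le> C * R' eps"
    by eventually_elim simp
  then show ?thesis
    using \<open>C > 0\<close> by (auto simp: cutoff_rate_def)
qed

lemma INF_admissible_le:
  assumes q: "0 < q" and u: "\<And>l. 1 \<le> l \<Longrightarrow> in_Lp q T (u l)"
    and rate: "cutoff_rate (besov_term d T s' q q u) (besov_term d T s q q u) q R"
  shows "\<exists>C>0. \<exists>e0>0. \<forall>eps. 0 < eps \<and> eps < e0 \<longrightarrow>
           admissible d T s s' q u eps \<noteq> {} \<and>
           (INF h\<in>admissible d T s s' q u eps. besov_norm d T s q q h powr q) \<le> C * R eps"
proof -
  obtain C where C: "C > 0" and ev: "\<forall>\<^sub>F eps in at_right 0. \<exists>N.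
      (\<forall>K. (\<Sum>l\<in>{N<..K}. besov_term d T s' q q u l) \<le> eps powr q)
      \<and> (\<Sum>l=1..N. besov_term d T s q q u l) \<le> C * R eps"
    using rate by (auto simp: cutoff_rate_def)
  have "\<forall>\<^sub>F eps in at_right 0. admissible d T s s' q u eps \<noteq> {} \<and>
           (INF h\<in>admissible d T s s' q u eps. besov_norm d T s q q h powr q) \<le> C * R eps"
    using ev eventually_at_right_less[of 0]
  proof eventually_elim
    case (elim eps)
    then obtain N where tail: "\<And>K. (\<Sum>l\<in>{N<..K}. besov_term d T s' q q u l) \<le> eps powr q"
      and head: "(\<Sum>l=1..N. besov_term d T s q q u l) \<le> C * R eps"
      by blast
    note trunc = truncate_admissible[OF q u _ tail, of s, simplified elim]
    have "(INF h\<in>admissible d T s s' q u eps. besov_norm d T s q q h powr q)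
        \<le> besov_norm d T s q q (truncate N u) powr q"
      using trunc(1) by (intro cINF_lower bdd_belowI[of _ 0]) auto
    then show ?case
      using trunc head by auto
  qed
  then show ?thesis
    using C by (auto simp: eventually_at_right_field)
qed

lemma nat_cutoff_exists:
  fixes \<kappa> q A eps :: real
  assumes \<kappa>: "0 < \<kappa>" and q: "0 < q" and A: "0 \<le> A" and eps: "0 < eps" "eps < 1"
  shows "\<exists>N\<ge>1. A * real N powr (- q * \<kappa>) \<le> eps powr q
                 \<and> real N \<le> 2 * max 1 (A powr (1 / (q * \<kappa>))) * eps powr (- 1 / \<kappa>)"
proof -
  define C0 where "C0 = max 1 (A powr (1 / (q * \<kappa>)))"
  have C0: "1 \<le> C0" by (simp add: C0_def)
  have "A = (A powr (1 / (q * \<kappa>))) powr (q * \<kappa>)"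
    using A q \<kappa> by (simp add: powr_powr)
  also have "\<dots> \<le> C0 powr (q * \<kappa>)"
    using q \<kappa> by (intro powr_mono2) (auto simp: C0_def)
  finally have A_le: "A \<le> C0 powr (q * \<kappa>)" .
  define R where "R = C0 * eps powr (- 1 / \<kappa>)"
  have "1 \<le> eps powr (- 1 / \<kappa>)"
    using powr_mono'[of "- 1 / \<kappa>" 0 eps] eps \<kappa> by simp
  then have R: "1 \<le> R"
    using C0 mult_mono[of 1 C0 1 "eps powr (- 1 / \<kappa>)"] by (simp add: R_def)
  define N where "N = nat \<lceil>R\<rceil>"
  have N: "R \<le> real N" "real N \<le> R + 1"
    using R by (simp_all add: N_def)
  have "(- 1 / \<kappa>) * (- q * \<kappa>) = q"
    using \<kappa> by simp
  then have "R powr (- q * \<kappa>) = C0 powr (- q * \<kappa>) * eps powr q"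
    using C0 eps by (simp add: R_def powr_mult powr_powr)
  then have "C0 powr (q * \<kappa>) * R powr (- q * \<kappa>) = eps powr q"
    using C0 by (simp add: powr_minus)
  moreover have "A * real N powr (- q * \<kappa>) \<le> C0 powr (q * \<kappa>) * R powr (- q * \<kappa>)"
    using A_le N R q \<kappa> by (intro mult_mono powr_mono2') auto
  ultimately show ?thesis
    using N R by (intro exI[of _ N]) (auto simp: R_def C0_def)
qed

lemma cutoff_exists:
  fixes f :: "nat \<Rightarrow> real" and \<kappa> q A :: real
  assumes \<kappa>: "0 < \<kappa>" and q: "0 < q" and A: "0 \<le> A"
    and tail: "\<And>N K. 1 \<le> N \<Longrightarrow> (\<Sum>l\<in>{N<..K}. f l) \<le> A * real N powr (- q * \<kappa>)"
  shows "\<exists>C>0. \<forall>\<^sub>F eps in at_right 0. \<exists>N\<ge>1.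
           (\<forall>K. (\<Sum>l\<in>{N<..K}. f l) \<le> eps powr q) \<and> real N \<le> C * eps powr (- 1 / \<kappa>)"
proof -
  define C where "C = 2 * max 1 (A powr (1 / (q * \<kappa>)))"
  have "\<forall>\<^sub>F eps in at_right 0. \<exists>N\<ge>1.
      (\<forall>K. (\<Sum>l\<in>{N<..K}. f l) \<le> eps powr q) \<and> real N \<le> C * eps powr (- 1 / \<kappa>)"
  proof (rule eventually_mono[OF eventually_at_right_real[OF zero_less_one]])
    fix eps :: real assume "eps \<in> {0<..<1}"
    then obtain N where "1 \<le> N" "A * real N powr (- q * \<kappa>) \<le> eps powr q"
        "real N \<le> C * eps powr (- 1 / \<kappa>)"
      using nat_cutoff_exists[OF \<kappa> q A] by (auto simp: C_def)
    then show "\<exists>N\<ge>1. (\<forall>K. (\<Sum>l\<in>{N<..K}. f l) \<le> eps powr q) \<and> real N \<le> C * eps powr (- 1 / \<kappa>)"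
      using tail by (blast intro: order_trans)
  qed
  then show ?thesis
    by (intro exI[of _ C]) (simp add: C_def)
qed

lemma cutoff_rate_powr:
  fixes f g :: "nat \<Rightarrow> real" and \<kappa> q A B e :: real
  assumes \<kappa>: "0 < \<kappa>" and q: "0 < q" and A: "0 \<le> A" and B: "0 \<le> B" and e: "0 \<le> e"
    and tail: "\<And>N K. 1 \<le> N \<Longrightarrow> (\<Sum>l\<in>{N<..K}. f l) \<le> A * real N powr (- q * \<kappa>)"
    and head: "\<And>N. 1 \<le> N \<Longrightarrow> (\<Sum>l=1..N. g l) \<le> B * real N powr e"
  shows "cutoff_rate f g q (\<lambda>eps. eps powr (- e / \<kappa>))"
proof -
  obtain C where C: "0 < C" and ev: "\<forall>\<^sub>F eps in at_right 0. \<exists>N\<ge>1.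
      (\<forall>K. (\<Sum>l\<in>{N<..K}. f l) \<le> eps powr q) \<and> real N \<le> C * eps powr (- 1 / \<kappa>)"
    using cutoff_exists[OF \<kappa> q A tail] by blast
  have "\<forall>\<^sub>F eps in at_right 0. \<exists>N. (\<forall>K. (\<Sum>l\<in>{N<..K}. f l) \<le> eps powr q)
          \<and> (\<Sum>l=1..N. g l) \<le> (B + 1) * C powr e * eps powr (- e / \<kappa>)"
    using ev eventually_at_right_less[of 0]
  proof eventually_elim
    case (elim eps)
    then obtain N where N: "1 \<le> N" "\<forall>K. (\<Sum>l\<in>{N<..K}. f l) \<le> eps powr q"
      "real N \<le> C * eps powr (- 1 / \<kappa>)"
      by blast
    have "real N powr e \<le> (C * eps powr (- 1 / \<kappa>)) powr e"
      using N e by (intro powr_mono2) auto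
    also have "\<dots> = C powr e * eps powr (- e / \<kappa>)"
      using C elim by (simp add: powr_mult powr_powr)
    finally have "(\<Sum>l=1..N. g l) \<le> B * (C powr e * eps powr (- e / \<kappa>))"
      using head[OF N(1)] B by (meson mult_left_mono order_trans)
    also have "\<dots> \<le> (B + 1) * C powr e * eps powr (- e / \<kappa>)"
      by (simp add: algebra_simps)
    finally show ?case
      using N by blast
  qed
  then show ?thesis
    unfolding cutoff_rate_def using B C by (intro exI[of _ "(B + 1) * C powr e"]) auto
qed

lemma one_plus_ln_le:
  fixes C \<kappa> eps :: real
  assumes C: "0 < C" and \<kappa>: "0 < \<kappa>" and N: "1 \<le> N" and eps: "0 < eps" "eps < exp (- 1)"
    and N_le: "real N \<le> C * eps powr (- 1 / \<kappa>)"
  shows "1 + ln (real N) \<le> (1 + \<bar>ln C\<bar> + 1 / \<kappa>) * (- ln eps)"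
proof -
  have "ln eps < ln (exp (- 1))"
    using eps by (subst ln_less_cancel_iff) auto
  then have L: "1 \<le> - ln eps" by simp
  have "ln (real N) \<le> ln (C * eps powr (- 1 / \<kappa>))"
    using N N_le by (intro ln_mono) auto
  also have "\<dots> = ln C + (- ln eps) / \<kappa>"
    using C eps by (simp add: ln_mult ln_powr)
  finally have lnN: "ln (real N) \<le> ln C + (- ln eps) / \<kappa>" .
  have "\<bar>ln C\<bar> \<le> \<bar>ln C\<bar> * (- ln eps)"
    using L mult_left_mono[of 1 "- ln eps" "\<bar>ln C\<bar>"] by simp
  moreover have "(1 + \<bar>ln C\<bar> + 1 / \<kappa>) * (- ln eps) = - ln eps + \<bar>ln C\<bar> * (- ln eps) + (- ln eps) / \<kappa>"
    by (simp add: algebra_simps)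
  ultimately show ?thesis
    using lnN L abs_ge_self[of "ln C"] by linarith
qed

lemma cutoff_rate_ln:
  fixes f g :: "nat \<Rightarrow> real" and \<kappa> q A B \<gamma> :: real
  assumes \<kappa>: "0 < \<kappa>" and q: "0 < q" and A: "0 \<le> A" and B: "0 \<le> B" and \<gamma>: "0 \<le> \<gamma>"
    and tail: "\<And>N K. 1 \<le> N \<Longrightarrow> (\<Sum>l\<in>{N<..K}. f l) \<le> A * real N powr (- q * \<kappa>)"
    and head: "\<And>N. 1 \<le> N \<Longrightarrow> (\<Sum>l=1..N. g l) \<le> B * (1 + ln (real N)) powr \<gamma>"
  shows "cutoff_rate f g q (\<lambda>eps. (- ln eps) powr \<gamma>)"
proof -
  obtain C where C: "0 < C" and ev: "\<forall>\<^sub>F eps in at_right 0. \<exists>N\<ge>1.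
      (\<forall>K. (\<Sum>l\<in>{N<..K}. f l) \<le> eps powr q) \<and> real N \<le> C * eps powr (- 1 / \<kappa>)"
    using cutoff_exists[OF \<kappa> q A tail] by blast
  define c where "c = 1 + \<bar>ln C\<bar> + 1 / \<kappa>"
  have c: "0 < c" using \<kappa> by (simp add: c_def add_pos_nonneg)
  have "\<forall>\<^sub>F eps in at_right 0. \<exists>N. (\<forall>K. (\<Sum>l\<in>{N<..K}. f l) \<le> eps powr q)
          \<and> (\<Sum>l=1..N. g l) \<le> (B + 1) * c powr \<gamma> * (- ln eps) powr \<gamma>"
    using ev eventually_at_right_real[OF exp_gt_zero[of "- 1"]]
  proof eventually_elim
    case (elim eps)
    then obtain N where N: "1 \<le> N" "\<forall>K. (\<Sum>l\<in>{N<..K}. f l) \<le> eps powr q"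
      "real N \<le> C * eps powr (- 1 / \<kappa>)"
      by blast
    have "1 + ln (real N) \<le> c * (- ln eps)"
      using one_plus_ln_le[OF C \<kappa> N(1) _ _ N(3)] elim by (simp add: c_def)
    then have "(1 + ln (real N)) powr \<gamma> \<le> (c * (- ln eps)) powr \<gamma>"
      using N \<gamma> by (intro powr_mono2) auto
    also have "\<dots> = c powr \<gamma> * (- ln eps) powr \<gamma>"
      by (rule powr_mult)
    finally have "(\<Sum>l=1..N. g l) \<le> B * (c powr \<gamma> * (- ln eps) powr \<gamma>)"
      using head[OF N(1)] B by (meson mult_left_mono order_trans)
    also have "\<dots> \<le> (B + 1) * c powr \<gamma> * (- ln eps) powr \<gamma>"
      by (simp add: algebra_simps)
    finally show ?case
      using N by blast
  qed
  then show ?thesis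
    unfolding cutoff_rate_def using B c by (intro exI[of _ "(B + 1) * c powr \<gamma>"]) auto
qed

lemma sum_besov_term_le_of_qd_le_q:
  assumes d: "1 \<le> d" and q: "0 < qd" "qd \<le> q" and u: "u \<in> besov d T sd qd q" and A: "finite A"
    and W: "\<And>l. l \<in> A \<Longrightarrow> real l powr (q * (t - sd) / d - 1 + q / qd) \<le> W" "0 \<le> W"
  shows "(\<Sum>l\<in>A. besov_term d T t q q u l) \<le> besov_norm d T sd qd q u powr q * W"
proof -
  define X where "X = besov_norm d T sd qd q u powr qd"
  have "(\<Sum>l\<in>A. besov_term d T t q q u l)
      = (\<Sum>l\<in>A. besov_term d T sd qd q u l powr (q / qd) * real l powr (q * (t - sd) / d - 1 + q / qd))"
    using besov_term_rescale[OF d _ q(1)] q by simp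
  also have "\<dots> \<le> X powr (q / qd) * W"
  proof (rule sum_powr_mult_le[OF A])
    show "0 \<le> besov_term d T sd qd q u l \<and> besov_term d T sd qd q u l \<le> X" for l
      using sum_besov_term_le[OF u q(1), of "{l}"] by (simp add: X_def besov_term_nonneg)
    show "(\<Sum>l\<in>A. besov_term d T sd qd q u l) \<le> X"
      using sum_besov_term_le[OF u q(1) A] by (simp add: X_def)
  qed (use q W in auto)
  also have "X powr (q / qd) = besov_norm d T sd qd q u powr q"
    using q by (simp add: X_def powr_powr)
  finally show ?thesis .
qed

lemma sum_besov_term_le_of_q_less_qd:
  assumes d: "1 \<le> d" and q: "0 < q" "q < qd" and u: "u \<in> besov d T sd qd q" and A: "finite A"
    and Y: "(\<Sum>l\<in>A. real l powr ((t - sd) / (d * (1 / q - 1 / qd)) - 1)) \<le> Y"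
  shows "(\<Sum>l\<in>A. besov_term d T t q q u l) \<le> besov_norm d T sd qd q u powr q * Y powr (1 - q / qd)"
proof -
  define \<rho> where "\<rho> = (t - sd) / (d * (1 / q - 1 / qd))"
  have qd0: "0 < qd" using q by simp
  have exponent: "q * (t - sd) / d - 1 + q / qd = (\<rho> - 1) * (1 - q / qd)"
    using d q by (simp add: \<rho>_def field_simps)
  have "besov_term d T t q q u l
      = besov_term d T sd qd q u l powr (q / qd) * (real l powr (\<rho> - 1)) powr (1 - q / qd)" for l
    unfolding besov_term_rescale[OF d q(1) qd0, of T t u l sd] exponent by (simp add: powr_powr)
  then have "(\<Sum>l\<in>A. besov_term d T t q q u l)
      \<le> (besov_norm d T sd qd q u powr qd) powr (q / qd) * Y powr (1 - q / qd)"
    using sum_besov_term_le[OF u qd0 A] q A Y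
    by (simp add: Holder_sum_powr besov_term_nonneg \<rho>_def)
  then show ?thesis
    using q by (simp add: powr_powr)
qed

lemma sum_besov_term_tail_le_of_q_less_qd:
  assumes d: "1 \<le> d" and q: "0 < q" "q < qd" and u: "u \<in> besov d T sd qd q" and sd: "s' < sd"
    and N: "1 \<le> N"
  shows "(\<Sum>l\<in>{N<..K}. besov_term d T s' q q u l)
      \<le> besov_norm d T sd qd q u powr q * ((sd - s') / (d * (1 / q - 1 / qd))) powr (q / qd - 1)
         * real N powr (- q * ((sd - s') / d))"
proof -
  define \<rho> where "\<rho> = (sd - s') / (d * (1 / q - 1 / qd))"
  have \<rho>: "0 < \<rho>" "\<rho> * (1 - q / qd) = q * ((sd - s') / d)"
    using d q sd by (simp_all add: \<rho>_def frac_less2 field_simps)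
  have "(\<Sum>l\<in>{N<..K}. besov_term d T s' q q u l)
      \<le> besov_norm d T sd qd q u powr q * (real N powr (- \<rho>) / \<rho>) powr (1 - q / qd)"
  proof (rule sum_besov_term_le_of_q_less_qd[OF d q u])
    have "(s' - sd) / (d * (1 / q - 1 / qd)) = - \<rho>"
      unfolding \<rho>_def by (metis minus_diff_eq divide_minus_left)
    then have "(s' - sd) / (d * (1 / q - 1 / qd)) - 1 = - 1 - \<rho>"
      by simp
    then show "(\<Sum>l\<in>{N<..K}. real l powr ((s' - sd) / (d * (1 / q - 1 / qd)) - 1))
        \<le> real N powr (- \<rho>) / \<rho>"
      using sum_greaterThanAtMost_powr_le[OF \<rho>(1) N, of K] by (simp only:)
  qed simp
  also have "(real N powr (- \<rho>) / \<rho>) powr (1 - q / qd) = real N powr (- \<rho> * (1 - q / qd)) / \<rho> powr (1 - q / qd)"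
    using \<rho> by (simp add: powr_divide powr_powr)
  also have "\<dots> = \<rho> powr (q / qd - 1) * real N powr (- q * ((sd - s') / d))"
    using \<rho>(2) powr_minus_divide[of \<rho> "1 - q / qd"] by simp
  finally show ?thesis
    by (simp add: \<rho>_def mult_ac)
qed

lemma cutoff_rate_qd_le_q:
  assumes d: "1 \<le> d" and q: "0 < qd" "qd \<le> q" and u: "u \<in> besov d T sd qd q"
    and \<kappa>: "0 < (sd - s') / d + 1 / q - 1 / qd"
  shows "cutoff_rate (besov_term d T s' q q u) (besov_term d T s q q u) q
           (\<lambda>eps. if s \<le> sd + real d / q - real d / qd then 1
                  else eps powr (- (((s - sd) / real d - 1 / q + 1 / qd)
                                    / ((sd - s') / real d + 1 / q - 1 / qd)) * q))"
proof -
  define \<kappa> where "\<kappa> = (sd - s') / d + 1 / q - 1 / qd"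
  define \<mu> where "\<mu> = (s - sd) / d - 1 / q + 1 / qd"
  define M where "M = besov_norm d T sd qd q u powr q"
  have tail: "(\<Sum>l\<in>{N<..K}. besov_term d T s' q q u l) \<le> M * real N powr (- q * \<kappa>)"
    if "1 \<le> N" for N K
  proof (rule sum_besov_term_le_of_qd_le_q[OF d q u, folded M_def])
    have "q * (s' - sd) / d - 1 + q / qd = - q * \<kappa>"
      using d q by (simp add: \<kappa>_def field_simps)
    then show "real l powr (q * (s' - sd) / d - 1 + q / qd) \<le> real N powr (- q * \<kappa>)"
      if "l \<in> {N<..K}" for l
      using that \<open>1 \<le> N\<close> q \<kappa> by (simp add: \<kappa>_def[symmetric] powr_mono2')
  qed simp_all
  have head: "(\<Sum>l=1..N. besov_term d T s q q u l) \<le> M * real N powr (max 0 (q * \<mu>))"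
    if "1 \<le> N" for N
  proof (rule sum_besov_term_le_of_qd_le_q[OF d q u, folded M_def])
    have "q * (s - sd) / d - 1 + q / qd = q * \<mu>"
      using d q by (simp add: \<mu>_def field_simps)
    then show "real l powr (q * (s - sd) / d - 1 + q / qd) \<le> real N powr (max 0 (q * \<mu>))"
      if "l \<in> {1..N}" for l
      using that powr_le_powr_max0[of "real l" "real N" "q * \<mu>"] by simp
  qed simp_all
  have "cutoff_rate (besov_term d T s' q q u) (besov_term d T s q q u) q
          (\<lambda>eps. eps powr (- max 0 (q * \<mu>) / \<kappa>))"
    using q \<kappa> by (intro cutoff_rate_powr[OF _ _ _ _ _ tail head]) (simp_all add: \<kappa>_def M_def)
  then show ?thesis
  proof (rule cutoff_rate_cong)
    have \<mu>_le: "\<mu> \<le> 0 \<longleftrightarrow> s \<le> sd + real d / q - real d / qd"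
      using d by (simp add: \<mu>_def field_simps)
    show "\<forall>\<^sub>F eps in at_right 0. eps powr (- max 0 (q * \<mu>) / \<kappa>)
        = (if s \<le> sd + real d / q - real d / qd then 1
           else eps powr (- (((s - sd) / real d - 1 / q + 1 / qd)
                             / ((sd - s') / real d + 1 / q - 1 / qd)) * q))"
      unfolding \<mu>_def[symmetric] \<kappa>_def[symmetric]
      by (rule eventually_mono[OF eventually_at_right_less])
         (use q in \<open>auto simp: \<mu>_le[symmetric] max_def mult_le_0_iff zero_le_mult_iff mult.commute\<close>)
  qed
qed

lemma sum_besov_term_head_le_of_q_less_qd:
  assumes d: "1 \<le> d" and q: "0 < q" "q < qd" and u: "u \<in> besov d T sd qd q" and s: "s \<noteq> sd"
    and N: "1 \<le> N"
  shows "(\<Sum>l=1..N. besov_term d T s q q u l)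
      \<le> besov_norm d T sd qd q u powr q * (1 + 1 / \<bar>(s - sd) / (d * (1 / q - 1 / qd))\<bar>) powr (1 - q / qd)
         * real N powr (max 0 (q * (s - sd) / d))"
proof -
  define \<rho> where "\<rho> = (s - sd) / (d * (1 / q - 1 / qd))"
  have "\<rho> \<noteq> 0" using d q s by (simp add: \<rho>_def)
  have "max 0 \<rho> * (1 - q / qd) = max 0 (\<rho> * (1 - q / qd))"
    using q by (simp add: max_mult_distrib_right)
  also have "\<rho> * (1 - q / qd) = q * (s - sd) / d"
    using d q by (simp add: \<rho>_def field_simps)
  finally have exponent: "max 0 \<rho> * (1 - q / qd) = max 0 (q * (s - sd) / d)" .
  have "(\<Sum>l=1..N. besov_term d T s q q u l)
      \<le> besov_norm d T sd qd q u powr q * ((1 + 1 / \<bar>\<rho>\<bar>) * real N powr (max 0 \<rho>)) powr (1 - q / qd)"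
    using sum_atLeastAtMost_powr_le[OF \<open>\<rho> \<noteq> 0\<close> N]
    by (intro sum_besov_term_le_of_q_less_qd[OF d q u]) (simp_all add: \<rho>_def)
  also have "\<dots> = besov_norm d T sd qd q u powr q * (1 + 1 / \<bar>\<rho>\<bar>) powr (1 - q / qd)
                   * real N powr (max 0 (q * (s - sd) / d))"
    by (simp add: powr_mult powr_powr exponent)
  finally show ?thesis
    by (simp add: \<rho>_def)
qed

lemma cutoff_rate_q_less_qd:
  assumes d: "1 \<le> d" and q: "0 < q" "q < qd" and u: "u \<in> besov d T sd qd q" and sd: "s' < sd"
  shows "cutoff_rate (besov_term d T s' q q u) (besov_term d T s q q u) q
           (\<lambda>eps. if s < sd then 1
                  else if s = sd then (- ln eps) powr (1 - q / qd)
                  else eps powr (- ((s - sd) / (sd - s')) * min q qd))"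
proof -
  define \<kappa> where "\<kappa> = (sd - s') / d"
  define M where "M = besov_norm d T sd qd q u powr q"
  have \<kappa>: "0 < \<kappa>" using d sd by (simp add: \<kappa>_def)
  note tail = sum_besov_term_tail_le_of_q_less_qd[OF d q u sd, folded \<kappa>_def]
  show ?thesis
  proof (cases "s = sd")
    case True
    have "(\<Sum>l=1..N. besov_term d T s q q u l) \<le> M * (1 + ln (real N)) powr (1 - q / qd)"
      if "1 \<le> N" for N
      using sum_atLeastAtMost_powr_minus_one_le[OF that] True
      by (intro sum_besov_term_le_of_q_less_qd[OF d q u, folded M_def]) simp_all
    then have "cutoff_rate (besov_term d T s' q q u) (besov_term d T s q q u) q
                 (\<lambda>eps. (- ln eps) powr (1 - q / qd))"
      using \<kappa> q by (intro cutoff_rate_ln[OF _ _ _ _ _ tail, where B = M]) (auto simp: M_def)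
    then show ?thesis
      using True by simp
  next
    case False
    define e where "e = max 0 (q * (s - sd) / d)"
    note head = sum_besov_term_head_le_of_q_less_qd[OF d q u False, folded e_def]
    have "cutoff_rate (besov_term d T s' q q u) (besov_term d T s q q u) q
            (\<lambda>eps. eps powr (- e / \<kappa>))"
      using \<kappa> q by (intro cutoff_rate_powr[OF _ _ _ _ _ tail head]) (auto simp: e_def)
    then show ?thesis
    proof (rule cutoff_rate_cong)
      have "e / \<kappa> = (if s < sd then 0 else (s - sd) / (sd - s') * min q qd)"
        using d q sd by (auto simp: e_def \<kappa>_def max_def field_simps zero_le_divide_iff)
      then show "\<forall>\<^sub>F eps in at_right 0. eps powr (- e / \<kappa>)
          = (if s < sd then 1 else if s = sd then (- ln eps) powr (1 - q / qd)
             else eps powr (- ((s - sd) / (sd - s')) * min q qd))"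
        using False by (intro eventually_mono[OF eventually_at_right_less]) auto
    qed
  qed
qed

lemma cutoff_rate_q_le_qd:
  assumes d: "1 \<le> d" and q: "0 < q" "q \<le> qd" and u: "u \<in> besov d T sd qd q" and sd: "s' < sd"
  shows "cutoff_rate (besov_term d T s' q q u) (besov_term d T s q q u) q
           (\<lambda>eps. if s < sd then 1
                  else if s = sd then (- ln eps) powr (1 - q / qd)
                  else eps powr (- ((s - sd) / (sd - s')) * min q qd))"
proof (cases "q = qd")
  case True
  have rate: "cutoff_rate (besov_term d T s' q q u) (besov_term d T s q q u) q
      (\<lambda>eps. if s \<le> sd + real d / q - real d / qd then 1
             else eps powr (- (((s - sd) / real d - 1 / q + 1 / qd)
                               / ((sd - s') / real d + 1 / q - 1 / qd)) * q))"
    using cutoff_rate_qd_le_q[OF d _ _ u] d sd True q by simp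
  have "(s - sd) / real d / ((sd - s') / real d) = (s - sd) / (sd - s')"
    using d by simp
  then show ?thesis
    by (intro cutoff_rate_cong[OF rate eventually_mono[OF eventually_at_right_real[OF zero_less_one]]])
       (use True q in auto)
next
  case False
  then show ?thesis
    using cutoff_rate_q_less_qd[OF d q(1) _ u sd] q by simp
qed

theorem lemmaA3:
  fixes d :: nat and T :: "real set" and Tmax :: real
    and q qd s s' sd :: real and ud :: "nat \<Rightarrow> real \<Rightarrow> real"
  assumes d: "d \<ge> 1"
    and T: "T \<subseteq> {0..Tmax}" "T \<in> sets lborel"
    and q: "1 \<le> q" "q \<le> 2" and qd: "1 \<le> qd" "qd \<le> 2"
    and sd: "sd > s'"
    and ud: "ud \<in> besov d T sd qd qd"
  shows
   "(qd \<ge> q \<longrightarrow>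
      (\<exists>C>0. \<exists>e0>0. \<forall>eps. 0 < eps \<and> eps < e0 \<longrightarrow>
         admissible d T s s' q ud eps \<noteq> {} \<and>
         (INF h\<in>admissible d T s s' q ud eps. besov_norm d T s q q h powr q)
           \<le> C * (if s < sd then 1
                  else if s = sd then (- ln eps) powr (1 - q / qd)
                  else eps powr (- ((s - sd) / (sd - s')) * min q qd))))
    \<and>
    (qd < q \<and> ud \<in> besov d T sd qd q \<and> sd > s' - real d / q + real d / qd \<longrightarrow>
      (\<exists>C>0. \<exists>e0>0. \<forall>eps. 0 < eps \<and> eps < e0 \<longrightarrow>
         admissible d T s s' q ud eps \<noteq> {} \<and>
         (INF h\<in>admissible d T s s' q ud eps. besov_norm d T s q q h powr q)
           \<le> C * (if s \<le> sd + real d / q - real d / qd then 1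
                  else eps powr (- (((s - sd) / real d - 1 / q + 1 / qd)
                                    / ((sd - s') / real d + 1 / q - 1 / qd)) * q))))"
proof -
  have q0: "0 < q" using q by simp
  have Tfin: "emeasure lborel T < \<infinity>"
    using T by (intro emeasure_bounded_finite bounded_subset[OF bounded_closed_interval])
  have udq: "ud \<in> besov d T sd qd q" if "q \<le> qd"
    using besov_subset_besov[OF T(2) Tfin q0 that, of qd] ud qd by auto
  have in_Lp: "in_Lp q T (ud l)" if "q \<le> qd \<or> ud \<in> besov d T sd qd q" "1 \<le> l" for l
    using that udq by (auto simp: besov_def)
  have \<kappa>: "0 < (sd - s') / d + 1 / q - 1 / qd" if "s' - real d / q + real d / qd < sd"
    using that d by (simp add: field_simps)
  show ?thesis
    by (intro conjI impI INF_admissible_le[OF q0] in_Lp cutoff_rate_q_le_qd[OF d q0 _ udq sd]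
          cutoff_rate_qd_le_q[OF d] \<kappa>) (use qd in auto)
qed

end
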